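(* Consider the quantized estimation system below, under the assumption that all partitioned observation subvectors $\{\mathbf{x}_{jl}\}$ are known to be independent, with $\mathbf{x}_{jl}$ having statistical model $(\mathscr{X}_{jl},\mathscr{F}_{jl},\mathscr{P}_{jl}^{\boldsymbol{\theta}})$. (i) Suppose the interior of $\boldsymbol{\Theta}\subset\mathbb{R}^{D_{\boldsymbol{\theta}}}$ is nonempty and every $q_j^{(\mathbf{s})}(\boldsymbol{\theta})$ is twice differentiable in $\boldsymbol{\theta}$ on $\boldsymbol{\Theta}$. Then for any $\boldsymbol{\theta}$, any quantization regions $\{I_{jl}^{(r)}\}$ and any statistical models $\{(\mathscr{X}_{jl},\mathscr{F}_{jl},\mathscr{P}_{jl}^{\boldsymbol{\theta}})\}$, if $$D_{\boldsymbol{\theta}} > \lambda_{\text{Indep}}(N,\{R_{jl}\}) := \sum_{j=1}^N\sum_{l=1}^{L_j}R_{jl}-\sum_{j=1}^N L_j,$$ then the Fisher information matrix for estimating $\boldsymbol{\theta}$ is singular. (ii) Suppose the interior of $\boldsymbol{\Theta}$ is nonempty and every $q_j^{(\mathbf{s})}(\boldsymbol{\theta})$ is continuous in $\boldsymbol{\theta}$. Then for any $\{I_{jl}^{(r)}\}$ and any $\{(\mathscr{X}_{jl},\mathscr{F}_{jl},\mathscr{P}_{jl}^{\boldsymbol{\theta}})\}$, if the same inequality $D_{\boldsymbol{\theta}}>\lambda_{\text{Indep}}(N,\{R_{jl}\})$ holds, the vector parameter space $\boldsymbol{\Theta}$ is not identifiable; moreover, every open subset $\mathcal{U}\subset\boldsymbol{\Theta}$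 of $\mathbb{R}^{D_{\boldsymbol{\theta}}}$ contains infinitely many nonidentifiable vector parameter points.
   Context: System: $N$ sensors; sensor $j$ observes $\mathbf{x}_j$ with statistical model $(\mathscr{X}_j,\mathscr{F}_j,\mathscr{P}_j^{\boldsymbol{\theta}})$, independent across $j$, unknown $\boldsymbol{\theta}\in\boldsymbol{\Theta}\subset\mathbb{R}^{D_{\boldsymbol{\theta}}}$. $\mathbf{x}_j$ is partitioned into $L_j$ subvectors $\mathbf{x}_{jl}$, each quantized by an $R_{jl}$-level vector quantizer $\gamma_{jl}(\mathbf{x}_{jl})=\sum_r r\,\mathbb{1}\{\mathbf{x}_{jl}\in I_{jl}^{(r)}\}$ with disjoint covering regions; the superquantizer output $\mathbf{u}_j=\Gamma_j(\mathbf{x}_j)=[\gamma_{j1}(\mathbf{x}_{j1}),\dots,\gamma_{jL_j}(\mathbf{x}_{jL_j})]^T$ is sent error-free to a fusion center, which estimates $\boldsymbol{\theta}$ from $\mathbf{u}=[\mathbf{u}_1^T,\dots,\mathbf{u}_N^T]^T$. $q_j^{(\mathbf{s})}(\boldsymbol{\theta})=\mathscr{P}_j^{\boldsymbol{\theta}}(\Gamma_j(\mathbf{x}_j)=\mathbf{s})$; under independence of subvectors, $q_j^{(\mathbf{s})}(\boldsymbol{\theta})=\prod_{l}\mathscr{P}_{jl}^{\boldsymbol{\theta}}(\gamma_{jl}(\mathbf{x}_{jl})=s_l)$. Fisher information matrix $\mathbf{J}(\boldsymbol{\theta})=\sum_j\sum_{\mathbf{s}}\frac{1}{q_j^{(\mathbf{s})}}\frac{\partial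 q_j^{(\mathbf{s})}}{\partial\boldsymbol{\theta}}\big[\frac{\partial q_j^{(\mathbf{s})}}{\partial\boldsymbol{\theta}}\big]^T$. Two distinct points are observationally equivalent if $\Pr(\mathbf{u}|\boldsymbol{\theta})=\Pr(\mathbf{u}|\boldsymbol{\theta}')$ for all $\mathbf{u}$; a point is identifiable if no other point is observationally equivalent to it; $\boldsymbol{\Theta}$ is identifiable if every point is. *)

theory Defs
  imports "HOL-Probability.Probability"
begin

definition quant :: "(nat \<Rightarrow> 'a set) \<Rightarrow> nat \<Rightarrow> 'a \<Rightarrow> nat" where
  "quant I R x = (\<Sum>r\<in>{1..R}. r * indicator (I r) x)"

definition sensor_outputs :: "nat \<Rightarrow> (nat \<Rightarrow> nat) \<Rightarrow> (nat \<Rightarrow> nat) set" where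
  "sensor_outputs L R = PiE {..<L} (\<lambda>l. {1..R l})"

text \<open>q_j^(s)(theta) under independence of the subvectors of sensor j.\<close>
definition sensor_prob ::
  "(nat \<Rightarrow> nat \<Rightarrow> 'p \<Rightarrow> 'a measure) \<Rightarrow> (nat \<Rightarrow> nat \<Rightarrow> nat \<Rightarrow> 'a set) \<Rightarrow>
   (nat \<Rightarrow> nat \<Rightarrow> nat) \<Rightarrow> (nat \<Rightarrow> nat) \<Rightarrow> nat \<Rightarrow> (nat \<Rightarrow> nat) \<Rightarrow> 'p \<Rightarrow> real" where
  "sensor_prob P I R L j s \<theta> =
     (\<Prod>l<L j. measure (P j l \<theta>) {x \<in> space (P j l \<theta>). quant (I j l) (R j l) x = s l})"

definition joint_outputs :: "nat \<Rightarrow> (nat \<Rightarrow> nat) \<Rightarrow> (nat \<Rightarrow> nat \<Rightarrow> nat) \<Rightarrow> (nat \<Rightarrow> nat \<Rightarrow> nat) set" where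
  "joint_outputs N L R = PiE {..<N} (\<lambda>j. sensor_outputs (L j) (R j))"

definition joint_prob ::
  "(nat \<Rightarrow> nat \<Rightarrow> 'p \<Rightarrow> 'a measure) \<Rightarrow> (nat \<Rightarrow> nat \<Rightarrow> nat \<Rightarrow> 'a set) \<Rightarrow>
   (nat \<Rightarrow> nat \<Rightarrow> nat) \<Rightarrow> (nat \<Rightarrow> nat) \<Rightarrow> nat \<Rightarrow> (nat \<Rightarrow> nat \<Rightarrow> nat) \<Rightarrow> 'p \<Rightarrow> real" where
  "joint_prob P I R L N u \<theta> = (\<Prod>j<N. sensor_prob P I R L j (u j) \<theta>)"

definition obs_equiv :: "'p set \<Rightarrow> 'u set \<Rightarrow> ('u \<Rightarrow> 'p \<Rightarrow> real) \<Rightarrow> 'p \<Rightarrow> 'p \<Rightarrow> bool" where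
  "obs_equiv \<Theta> U Pr \<theta> \<theta>' \<longleftrightarrow> \<theta> \<in> \<Theta> \<and> \<theta>' \<in> \<Theta> \<and> \<theta> \<noteq> \<theta>' \<and> (\<forall>u\<in>U. Pr u \<theta> = Pr u \<theta>')"

definition identifiable_point :: "'p set \<Rightarrow> 'u set \<Rightarrow> ('u \<Rightarrow> 'p \<Rightarrow> real) \<Rightarrow> 'p \<Rightarrow> bool" where
  "identifiable_point \<Theta> U Pr \<theta> \<longleftrightarrow> \<theta> \<in> \<Theta> \<and> \<not> (\<exists>\<theta>'. obs_equiv \<Theta> U Pr \<theta> \<theta>')"

definition nonidentifiable_point :: "'p set \<Rightarrow> 'u set \<Rightarrow> ('u \<Rightarrow> 'p \<Rightarrow> real) \<Rightarrow> 'p \<Rightarrow> bool" where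
  "nonidentifiable_point \<Theta> U Pr \<theta> \<longleftrightarrow> \<theta> \<in> \<Theta> \<and> (\<exists>\<theta>'. obs_equiv \<Theta> U Pr \<theta> \<theta>')"

definition identifiable_space :: "'p set \<Rightarrow> 'u set \<Rightarrow> ('u \<Rightarrow> 'p \<Rightarrow> real) \<Rightarrow> bool" where
  "identifiable_space \<Theta> U Pr \<longleftrightarrow> (\<forall>\<theta>\<in>\<Theta>. identifiable_point \<Theta> U Pr \<theta>)"

definition grad :: "(real^'d \<Rightarrow> real) \<Rightarrow> real^'d \<Rightarrow> real^'d" where
  "grad f \<theta> = (\<chi> i. frechet_derivative f (at \<theta>) (axis i 1))"

definition outer :: "real^'d \<Rightarrow> real^'d^'d" where
  "outer g = (\<chi> i k. g$i * g$k)"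

definition fisher_info ::
  "nat \<Rightarrow> (nat \<Rightarrow> (nat \<Rightarrow> nat) set) \<Rightarrow> (nat \<Rightarrow> (nat \<Rightarrow> nat) \<Rightarrow> real^'d \<Rightarrow> real) \<Rightarrow> real^'d \<Rightarrow> real^'d^'d" where
  "fisher_info N S q \<theta> = (\<Sum>j<N. \<Sum>s\<in>S j. (1 / q j s \<theta>) *\<^sub>R outer (grad (q j s) \<theta>))"

definition twice_differentiable_on :: "(real^'d \<Rightarrow> real) \<Rightarrow> (real^'d) set \<Rightarrow> bool" where
  "twice_differentiable_on f S \<longleftrightarrow>
     (\<exists>g :: real^'d \<Rightarrow> real^'d.
        (\<forall>x\<in>S. (f has_derivative (\<lambda>h. g x \<bullet> h)) (at x within S)) \<and> g differentiable_on S)"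

definition lambda_indep :: "nat \<Rightarrow> (nat \<Rightarrow> nat) \<Rightarrow> (nat \<Rightarrow> nat \<Rightarrow> nat) \<Rightarrow> int" where
  "lambda_indep N L R = (\<Sum>j<N. \<Sum>l<L j. int (R j l)) - (\<Sum>j<N. int (L j))"

end

theory Submission
  imports Defs
begin

text \<open>Under independence, q_j^(s) is the product over l of the cell probabilities
p_jl(s_l) = P(x_jl \<in> I_jl^(s_l)), and for each (j, l) these R_jl numbers sum to one. Hence the
distribution of u is a function of the lambda_Indep numbers p_jl(r) with r < R_jl, each of which
equals, on \<Theta>, a marginal sum of the q's and so inherits their regularity.
(i) Every gradient of a q_j^(s) lies in the span of the at most lambda_Indep gradients of these
numbers, so a nonzero vector orthogonal to that span lies in the kernel of J.
(ii) Distinct points at which these numbers agree are observationally equivalent. If an open set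
contained only finitely many nonidentifiable points, removing them would leave a nonempty open set
on which \<theta> \<mapsto> (p_jl(r)) is continuous and injective into R^lambda_Indep, which invariance of
domain forbids when D > lambda_Indep.\<close>

lemma quant_eq_of_mem:
  assumes "disjoint_family_on I {1..R}" "r \<in> {1..R}" "x \<in> I r"
  shows "quant I R x = r"
proof -
  have "quant I R x = (\<Sum>r'\<in>{1..R}. if r' = r then r else 0)"
    unfolding quant_def
  proof (rule sum.cong[OF refl])
    fix r' assume "r' \<in> {1..R}"
    then have "x \<in> I r' \<longleftrightarrow> r' = r"
      using assms unfolding disjoint_family_on_def by blast
    then show "r' * indicator (I r') x = (if r' = r then r else 0)" by (simp add: assms(3))
  qed
  also have "\<dots> = r" using assms(2) by simp
  finally show ?thesis .
qed

lemma quant_level_set: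
  assumes "disjoint_family_on I {1..R}" "(\<Union>r\<in>{1..R}. I r) = \<Omega>" "r \<in> {1..R}"
  shows "{x \<in> \<Omega>. quant I R x = r} = I r"
  using assms quant_eq_of_mem[OF assms(1)] by blast

lemma sum_prob_quant_level_sets:
  assumes "prob_space M" "disjoint_family_on I {1..R}"
    and "\<And>r. r \<in> {1..R} \<Longrightarrow> I r \<in> sets M" "(\<Union>r\<in>{1..R}. I r) = space M"
  shows "(\<Sum>r\<in>{1..R}. measure M {x \<in> space M. quant I R x = r}) = 1"
proof -
  interpret prob_space M by fact
  have "(\<Sum>r\<in>{1..R}. measure M {x \<in> space M. quant I R x = r}) = (\<Sum>r\<in>{1..R}. measure M (I r))"
    using quant_level_set[OF assms(2,4)] by simp
  also have "\<dots> = measure M (\<Union>r\<in>{1..R}. I r)"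
    by (rule finite_measure_finite_Union[symmetric]) (use assms(2,3) in auto)
  also have "\<dots> = 1" using assms(4) prob_space by simp
  finally show ?thesis .
qed

definition quant_prob :: "(nat \<Rightarrow> nat \<Rightarrow> 'p \<Rightarrow> 'a measure) \<Rightarrow> (nat \<Rightarrow> nat \<Rightarrow> nat \<Rightarrow> 'a set) \<Rightarrow>
    (nat \<Rightarrow> nat \<Rightarrow> nat) \<Rightarrow> nat \<Rightarrow> nat \<Rightarrow> nat \<Rightarrow> 'p \<Rightarrow> real" where
  "quant_prob P I R j l r \<theta> = measure (P j l \<theta>) {x \<in> space (P j l \<theta>). quant (I j l) (R j l) x = r}"

lemma sensor_prob_eq_prod_quant_prob:
  "sensor_prob P I R L j s \<theta> = (\<Prod>l<L j. quant_prob P I R j l (s l) \<theta>)"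
  by (simp add: sensor_prob_def quant_prob_def)

lemma sum_PiE_prod_marginal:
  fixes p :: "'i \<Rightarrow> 'b \<Rightarrow> 'c::comm_semiring_1"
  assumes "finite J" "\<And>i. i \<in> J \<Longrightarrow> finite (A i)" "i0 \<in> J" "r \<in> A i0"
    and "\<And>i. i \<in> J - {i0} \<Longrightarrow> (\<Sum>y\<in>A i. p i y) = 1"
  shows "(\<Sum>s\<in>{s \<in> PiE J A. s i0 = r}. \<Prod>i\<in>J. p i (s i)) = p i0 r"
proof -
  define B where "B i = (if i = i0 then {r} else A i)" for i
  have "{s \<in> PiE J A. s i0 = r} = PiE J B"
    using assms(3,4) by (auto simp: B_def PiE_iff extensional_def split: if_split_asm)
  moreover have "finite (B i)" if "i \<in> J" for i
    using assms(2) that by (simp add: B_def)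
  ultimately have "(\<Sum>s\<in>{s \<in> PiE J A. s i0 = r}. \<Prod>i\<in>J. p i (s i)) = (\<Prod>i\<in>J. \<Sum>y\<in>B i. p i y)"
    using assms(1) by (simp add: prod_sum_PiE)
  also have "\<dots> = (\<Prod>i\<in>J. if i = i0 then p i0 r else 1)"
    using assms(5) by (intro prod.cong) (auto simp: B_def)
  also have "\<dots> = p i0 r" using assms(1,3) by (simp add: prod.delta)
  finally show ?thesis .
qed

lemma outer_mult_vec: "outer a *v v = (a \<bullet> v) *\<^sub>R a"
  by (simp add: vec_eq_iff outer_def matrix_vector_mult_def inner_vec_def sum_distrib_left
      sum_distrib_right mult.assoc mult.commute mult.left_commute)

lemma sum_matrix_vector_mult: "(\<Sum>x\<in>A. F x) *v v = (\<Sum>x\<in>A. F x *v v)"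
  by (induct A rule: infinite_finite_induct) (simp_all add: matrix_vector_mult_add_rdistrib)

lemma fisher_info_mult_vec_eq_0:
  assumes "\<And>j s. j < N \<Longrightarrow> s \<in> S j \<Longrightarrow> grad (q j s) \<theta> \<bullet> v = 0"
  shows "fisher_info N S q \<theta> *v v = 0"
  using assms by (simp add: fisher_info_def sum_matrix_vector_mult
      scaleR_matrix_vector_assoc[symmetric] outer_mult_vec)

lemma fisher_info_not_invertible:
  fixes G :: "(real^'d) set"
  assumes "finite G" "card G < CARD('d)"
    and "\<And>j s. j < N \<Longrightarrow> s \<in> S j \<Longrightarrow> grad (q j s) \<theta> \<in> span G"
  shows "\<not> invertible (fisher_info N S q \<theta>)"
proof
  have "dim G < DIM(real^'d)" using dim_le_card'[OF assms(1)] assms(2) by simp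
  then obtain v :: "real^'d" where "v \<noteq> 0" and v: "\<And>y. y \<in> span G \<Longrightarrow> orthogonal v y"
    using orthogonal_to_subspace_exists by blast
  have "fisher_info N S q \<theta> *v v = 0"
    using assms(3) v by (intro fisher_info_mult_vec_eq_0) (metis orthogonal_def inner_commute)
  moreover assume "invertible (fisher_info N S q \<theta>)"
  ultimately show False
    using \<open>v \<noteq> 0\<close> by (metis invertible_left_inverse matrix_left_invertible_ker)
qed

lemma grad_eq_of_has_derivative:
  assumes "(f has_derivative (\<lambda>h. g \<bullet> h)) (at x)"
  shows "grad f x = g"
proof -
  have "frechet_derivative f (at x) = (\<lambda>h. g \<bullet> h)"
    using frechet_derivative_at[OF assms] by simp
  then show ?thesis by (simp add: grad_def vec_eq_iff inner_axis)
qed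

lemma twice_differentiable_on_has_derivative_grad:
  assumes "twice_differentiable_on f S" "x \<in> interior S"
  shows "(f has_derivative (\<lambda>h. grad f x \<bullet> h)) (at x)"
proof -
  obtain g where "(f has_derivative (\<lambda>h. g \<bullet> h)) (at x within S)"
    using assms interior_subset unfolding twice_differentiable_on_def by blast
  then have "(f has_derivative (\<lambda>h. g \<bullet> h)) (at x)"
    using at_within_interior[OF assms(2)] by simp
  then show ?thesis using grad_eq_of_has_derivative by metis
qed

lemma gradient_eq_0_of_locally_constant:
  assumes "(f has_derivative (\<lambda>h. g \<bullet> h)) (at x)" "open T" "x \<in> T" "\<And>y. y \<in> T \<Longrightarrow> f y = c"
  shows "g = 0"
proof -
  have "(f has_derivative (\<lambda>h. 0)) (at x)"
    by (rule has_derivative_transform_within_open[OF has_derivative_const assms(2,3)])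
       (use assms(4) in simp)
  then have "(\<lambda>h. g \<bullet> h) = (\<lambda>h. 0)" using has_derivative_unique assms(1) by blast
  then show ?thesis by (metis inner_eq_zero_iff)
qed

text \<open>A consequence of invariance of domain.\<close>
lemma DIM_le_card_of_continuous_separating:
  fixes \<phi> :: "'k \<Rightarrow> real^'d \<Rightarrow> real"
  assumes "open W" "W \<noteq> {}" "finite K"
    and cont: "\<And>k. k \<in> K \<Longrightarrow> continuous_on W (\<phi> k)"
    and sep: "\<And>a b. a \<in> W \<Longrightarrow> b \<in> W \<Longrightarrow> (\<And>k. k \<in> K \<Longrightarrow> \<phi> k a = \<phi> k b) \<Longrightarrow> a = b"
  shows "CARD('d) \<le> card K"
proof (rule ccontr)
  assume "\<not> CARD('d) \<le> card K"
  then obtain h :: "'k \<Rightarrow> 'd" where h: "inj_on h K"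
    using card_le_inj[OF assms(3), of "UNIV :: 'd set"] by auto
  define B where "B = (\<lambda>k. axis (h k) (1::real)) ` K"
  define f where "f \<theta> = (\<Sum>k\<in>K. \<phi> k \<theta> *\<^sub>R axis (h k) (1::real))" for \<theta>
  have f_nth: "f \<theta> $ h k = \<phi> k \<theta>" if "k \<in> K" for \<theta> k
  proof -
    have "f \<theta> $ h k = (\<Sum>k'\<in>K. if k' = k then \<phi> k' \<theta> else 0)"
      unfolding f_def sum_component
      by (intro sum.cong refl) (use h that in \<open>auto simp: axis_def inj_on_eq_iff\<close>)
    then show ?thesis using assms(3) that by simp
  qed
  have "inj_on f W"
    by (rule inj_onI, rule sep) (auto simp: f_nth[symmetric])
  moreover have "continuous_on W f"
    unfolding f_def by (intro continuous_intros cont)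
  moreover have "f \<in> W \<rightarrow> span B"
    unfolding f_def B_def by (auto intro: span_sum span_mul span_base)
  ultimately have "dim (UNIV :: (real^'d) set) \<le> dim (span B)"
    using assms(1,2) by (intro invariance_of_dimension_subspaces) auto
  also have "\<dots> \<le> card K"
    unfolding B_def dim_span using dim_le_card' card_image_le assms(3)
    by (metis finite_imageI order_trans)
  finally show False using \<open>\<not> CARD('d) \<le> card K\<close> by simp
qed

locale product_model =
  fixes N :: nat and L :: "nat \<Rightarrow> nat" and R :: "nat \<Rightarrow> nat \<Rightarrow> nat"
    and p :: "nat \<Rightarrow> nat \<Rightarrow> nat \<Rightarrow> real^'d \<Rightarrow> real"
    and q :: "nat \<Rightarrow> (nat \<Rightarrow> nat) \<Rightarrow> real^'d \<Rightarrow> real"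
    and \<Theta> :: "(real^'d) set"
  assumes sum_p: "\<And>j l \<theta>. j < N \<Longrightarrow> l < L j \<Longrightarrow> \<theta> \<in> \<Theta> \<Longrightarrow> (\<Sum>r\<in>{1..R j l}. p j l r \<theta>) = 1"
    and q_eq_prod: "\<And>j s \<theta>. j < N \<Longrightarrow> s \<in> sensor_outputs (L j) (R j) \<Longrightarrow> \<theta> \<in> \<Theta> \<Longrightarrow>
                      q j s \<theta> = (\<Prod>l<L j. p j l (s l) \<theta>)"
    and nonempty: "\<Theta> \<noteq> {}"
begin

abbreviation outputs :: "nat \<Rightarrow> (nat \<Rightarrow> nat) set" where
  "outputs j \<equiv> sensor_outputs (L j) (R j)"

abbreviation joint_q :: "(nat \<Rightarrow> nat \<Rightarrow> nat) \<Rightarrow> real^'d \<Rightarrow> real" where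
  "joint_q \<equiv> \<lambda>u \<theta>. \<Prod>j<N. q j (u j) \<theta>"

text \<open>Cells whose probabilities are not fixed by normalization.\<close>
definition free_cells :: "(nat \<times> nat \<times> nat) set" where
  "free_cells = (SIGMA j:{..<N}. SIGMA l:{..<L j}. {1..<R j l})"

definition marginal :: "nat \<Rightarrow> nat \<Rightarrow> nat \<Rightarrow> real^'d \<Rightarrow> real" where
  "marginal j l r \<theta> = (\<Sum>s\<in>{s \<in> outputs j. s l = r}. q j s \<theta>)"

lemma outputs_level: "s \<in> outputs j \<Longrightarrow> l < L j \<Longrightarrow> s l \<in> {1..R j l}"
  unfolding sensor_outputs_def by (auto simp: PiE_iff)

lemma finite_free_cells: "finite free_cells"
  unfolding free_cells_def by (auto intro!: finite_SigmaI)

lemma levels_pos: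
  assumes "j < N" "l < L j"
  shows "1 \<le> R j l"
proof (rule ccontr)
  assume "\<not> 1 \<le> R j l"
  moreover obtain \<theta> where "\<theta> \<in> \<Theta>" using nonempty by blast
  ultimately show False using sum_p[OF assms] by simp
qed

lemma levels_eq_insert_last:
  "j < N \<Longrightarrow> l < L j \<Longrightarrow> {1..R j l} = insert (R j l) {1..<R j l}"
  using levels_pos by (auto simp flip: atLeastLessThanSuc_atLeastAtMost simp: atLeastLessThanSuc)

lemma card_free_cells: "int (card free_cells) = lambda_indep N L R"
proof -
  have "int (card free_cells) = (\<Sum>j<N. \<Sum>l<L j. int (R j l - 1))"
    unfolding free_cells_def by (simp add: card_SigmaI of_nat_sum)
  also have "\<dots> = (\<Sum>j<N. \<Sum>l<L j. int (R j l) - 1)"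
    using levels_pos by (intro sum.cong) (auto simp: of_nat_diff)
  finally show ?thesis by (simp add: lambda_indep_def sum_subtractf)
qed

lemma p_eq_marginal:
  assumes "j < N" "l < L j" "\<theta> \<in> \<Theta>" "r \<in> {1..R j l}"
  shows "p j l r \<theta> = marginal j l r \<theta>"
proof -
  have "marginal j l r \<theta> = (\<Sum>s\<in>{s \<in> outputs j. s l = r}. \<Prod>l<L j. p j l (s l) \<theta>)"
    unfolding marginal_def using assms(1,3) by (intro sum.cong) (auto simp: q_eq_prod)
  also have "\<dots> = p j l r \<theta>"
    unfolding sensor_outputs_def
    by (rule sum_PiE_prod_marginal) (use assms sum_p in auto)
  finally show ?thesis by simp
qed

context
  fixes \<theta>0 :: "real^'d"
  assumes interior: "\<theta>0 \<in> interior \<Theta>"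
    and diff: "\<And>j s. j < N \<Longrightarrow> s \<in> outputs j \<Longrightarrow>
                 (q j s has_derivative (\<lambda>h. grad (q j s) \<theta>0 \<bullet> h)) (at \<theta>0)"
begin

definition marginal_grad :: "nat \<Rightarrow> nat \<Rightarrow> nat \<Rightarrow> real^'d" where
  "marginal_grad j l r = (\<Sum>s\<in>{s \<in> outputs j. s l = r}. grad (q j s) \<theta>0)"

lemma has_derivative_marginal:
  assumes "j < N"
  shows "(marginal j l r has_derivative (\<lambda>h. marginal_grad j l r \<bullet> h)) (at \<theta>0)"
  unfolding marginal_def[abs_def] marginal_grad_def inner_sum_left
  by (intro has_derivative_sum diff) (use assms in auto)

lemma sum_marginal_grad:
  assumes "j < N" "l < L j"
  shows "(\<Sum>r\<in>{1..R j l}. marginal_grad j l r) = 0"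
proof (rule gradient_eq_0_of_locally_constant[where T = "interior \<Theta>" and c = 1])
  show "((\<lambda>\<theta>. \<Sum>r\<in>{1..R j l}. marginal j l r \<theta>) has_derivative
      (\<lambda>h. (\<Sum>r\<in>{1..R j l}. marginal_grad j l r) \<bullet> h)) (at \<theta>0)"
    unfolding inner_sum_left by (intro has_derivative_sum has_derivative_marginal assms(1))
  show "(\<Sum>r\<in>{1..R j l}. marginal j l r \<theta>) = 1" if "\<theta> \<in> interior \<Theta>" for \<theta>
  proof -
    have "\<theta> \<in> \<Theta>" using that interior_subset by blast
    then have "(\<Sum>r\<in>{1..R j l}. marginal j l r \<theta>) = (\<Sum>r\<in>{1..R j l}. p j l r \<theta>)"
      by (intro sum.cong refl p_eq_marginal[OF assms, symmetric])
    also have "\<dots> = 1" by (rule sum_p[OF assms \<open>\<theta> \<in> \<Theta>\<close>])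
    finally show ?thesis .
  qed
qed (use interior in auto)

lemma grad_q_eq:
  assumes "j < N" "s \<in> outputs j"
  shows "grad (q j s) \<theta>0 =
    (\<Sum>l<L j. (\<Prod>l'\<in>{..<L j} - {l}. p j l' (s l') \<theta>0) *\<^sub>R marginal_grad j l (s l))"
proof (rule grad_eq_of_has_derivative)
  have "\<theta>0 \<in> \<Theta>" using interior interior_subset by blast
  have marginal_eq_p: "marginal j l (s l) \<theta> = p j l (s l) \<theta>" if "\<theta> \<in> \<Theta>" "l < L j" for \<theta> l
    using p_eq_marginal[OF assms(1) that(2,1) outputs_level[OF assms(2) that(2)]] by simp
  have "((\<lambda>\<theta>. \<Prod>l<L j. marginal j l (s l) \<theta>) has_derivative
      (\<lambda>h. \<Sum>l<L j. (marginal_grad j l (s l) \<bullet> h) * (\<Prod>l'\<in>{..<L j} - {l}. marginal j l' (s l') \<theta>0)))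
      (at \<theta>0)"
    by (intro has_derivative_prod has_derivative_marginal assms(1))
  also have "(\<lambda>h. \<Sum>l<L j. (marginal_grad j l (s l) \<bullet> h) * (\<Prod>l'\<in>{..<L j} - {l}. marginal j l' (s l') \<theta>0))
      = (\<lambda>h. (\<Sum>l<L j. (\<Prod>l'\<in>{..<L j} - {l}. p j l' (s l') \<theta>0) *\<^sub>R marginal_grad j l (s l)) \<bullet> h)"
    using \<open>\<theta>0 \<in> \<Theta>\<close> marginal_eq_p by (simp add: inner_sum_left mult.commute)
  finally show "(q j s has_derivative
      (\<lambda>h. (\<Sum>l<L j. (\<Prod>l'\<in>{..<L j} - {l}. p j l' (s l') \<theta>0) *\<^sub>R marginal_grad j l (s l)) \<bullet> h))
      (at \<theta>0)"
  proof (rule has_derivative_transform_within_open[OF _ open_interior interior])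
    show "(\<Prod>l<L j. marginal j l (s l) \<theta>) = q j s \<theta>" if "\<theta> \<in> interior \<Theta>" for \<theta>
    proof -
      have "\<theta> \<in> \<Theta>" using that interior_subset by blast
      then show ?thesis unfolding q_eq_prod[OF assms \<open>\<theta> \<in> \<Theta>\<close>]
        by (intro prod.cong refl marginal_eq_p) auto
    qed
  qed
qed

lemma grad_q_in_span:
  obtains G :: "(real^'d) set" where "finite G" "card G \<le> card free_cells"
    "\<And>j s. j < N \<Longrightarrow> s \<in> outputs j \<Longrightarrow> grad (q j s) \<theta>0 \<in> span G"
proof
  define G where "G = (\<lambda>(j, l, r). marginal_grad j l r) ` free_cells"
  show "finite G" "card G \<le> card free_cells"
    unfolding G_def using finite_free_cells by (auto intro: card_image_le)
  have marginal_grad_in_span: "marginal_grad j l r \<in> span G"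
    if "j < N" "l < L j" "r \<in> {1..R j l}" for j l r
  proof (cases "r < R j l")
    case True
    then have "(j, l, r) \<in> free_cells" using that by (simp add: free_cells_def)
    then show ?thesis unfolding G_def by (force intro: span_base)
  next
    case False
    have "marginal_grad j l (R j l) = - (\<Sum>r'\<in>{1..<R j l}. marginal_grad j l r')"
      using sum_marginal_grad[OF that(1,2)] unfolding levels_eq_insert_last[OF that(1,2)]
      by (simp add: eq_neg_iff_add_eq_0)
    moreover have "marginal_grad j l r' \<in> span G" if "r' \<in> {1..<R j l}" for r'
      using that \<open>j < N\<close> \<open>l < L j\<close> unfolding G_def free_cells_def by (force intro: span_base)
    moreover have "r = R j l" using False that(3) by simp
    ultimately show ?thesis by (auto intro!: span_neg span_sum)
  qed
  show "grad (q j s) \<theta>0 \<in> span G" if "j < N" "s \<in> outputs j" for j s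
    unfolding grad_q_eq[OF that]
    using that outputs_level marginal_grad_in_span by (intro span_sum span_mul) auto
qed

end

lemma p_eq_if_free_cells_eq:
  assumes "a \<in> \<Theta>" "b \<in> \<Theta>" "\<And>j l r. (j, l, r) \<in> free_cells \<Longrightarrow> p j l r a = p j l r b"
    and "j < N" "l < L j" "r \<in> {1..R j l}"
  shows "p j l r a = p j l r b"
proof (cases "r < R j l")
  case True
  then show ?thesis using assms by (simp add: free_cells_def)
next
  case False
  then have "r = R j l" using assms(6) by simp
  have "(\<Sum>r\<in>{1..R j l}. p j l r a) = (\<Sum>r\<in>{1..R j l}. p j l r b)"
    using sum_p[OF assms(4,5)] assms(1,2) by simp
  then have "p j l (R j l) a + (\<Sum>r\<in>{1..<R j l}. p j l r a) = p j l (R j l) b + (\<Sum>r\<in>{1..<R j l}. p j l r b)"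
    unfolding levels_eq_insert_last[OF assms(4,5)] by simp
  moreover have "(\<Sum>r\<in>{1..<R j l}. p j l r a) = (\<Sum>r\<in>{1..<R j l}. p j l r b)"
    using assms(3,4,5) by (intro sum.cong) (auto simp: free_cells_def)
  ultimately show ?thesis using \<open>r = R j l\<close> by simp
qed

lemma joint_q_eq_if_free_cells_eq:
  assumes "a \<in> \<Theta>" "b \<in> \<Theta>" "\<And>j l r. (j, l, r) \<in> free_cells \<Longrightarrow> p j l r a = p j l r b"
    and "u \<in> joint_outputs N L R"
  shows "joint_q u a = joint_q u b"
proof (rule prod.cong[OF refl])
  fix j assume "j \<in> {..<N}"
  then have "j < N" "u j \<in> outputs j" using assms(4) by (auto simp: joint_outputs_def PiE_iff)
  then have "q j (u j) a = (\<Prod>l<L j. p j l (u j l) a)" "q j (u j) b = (\<Prod>l<L j. p j l (u j l) b)"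
    using assms(1,2) by (simp_all add: q_eq_prod)
  moreover have "(\<Prod>l<L j. p j l (u j l) a) = (\<Prod>l<L j. p j l (u j l) b)"
    using \<open>j < N\<close> \<open>u j \<in> outputs j\<close>
    by (intro prod.cong refl p_eq_if_free_cells_eq[OF assms(1-3)]) (use outputs_level in auto)
  ultimately show "q j (u j) a = q j (u j) b" by simp
qed

lemma continuous_on_p:
  assumes "\<And>j s. j < N \<Longrightarrow> s \<in> outputs j \<Longrightarrow> continuous_on \<Theta> (q j s)"
    and "j < N" "l < L j" "r \<in> {1..R j l}"
  shows "continuous_on \<Theta> (p j l r)"
proof -
  have "continuous_on \<Theta> (marginal j l r)"
    unfolding marginal_def using assms(1,2) by (intro continuous_intros) auto
  then show ?thesis using p_eq_marginal[OF assms(2,3) _ assms(4)] continuous_on_cong by metis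
qed

lemma infinite_nonidentifiable_points:
  assumes cont: "\<And>j s. j < N \<Longrightarrow> s \<in> outputs j \<Longrightarrow> continuous_on \<Theta> (q j s)"
    and small: "card free_cells < CARD('d)"
    and U: "open U" "U \<noteq> {}" "U \<subseteq> \<Theta>"
  shows "infinite {\<theta> \<in> U. nonidentifiable_point \<Theta> (joint_outputs N L R) joint_q \<theta>}"
    (is "infinite ?F")
proof
  assume "finite ?F"
  define W where "W = U - ?F"
  have "open W" unfolding W_def using U(1) \<open>finite ?F\<close> by (intro open_Diff finite_imp_closed)
  moreover have "W \<noteq> {}"
  proof
    assume "W = {}"
    then have "U \<subseteq> ?F" by (auto simp: W_def)
    then have "finite U" using \<open>finite ?F\<close> by (rule finite_subset)
    then show False using U(1,2) finite_imp_not_open by blast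
  qed
  moreover have "continuous_on W (p j l r)" if "(j, l, r) \<in> free_cells" for j l r
  proof -
    have "j < N" "l < L j" "r \<in> {1..R j l}" using that by (auto simp: free_cells_def)
    then have "continuous_on \<Theta> (p j l r)" using cont continuous_on_p by blast
    then show ?thesis by (rule continuous_on_subset) (use U(3) in \<open>auto simp: W_def\<close>)
  qed
  moreover have "a = b" if "a \<in> W" "b \<in> W" "\<And>j l r. (j, l, r) \<in> free_cells \<Longrightarrow> p j l r a = p j l r b"
    for a b
  proof (rule ccontr)
    assume "a \<noteq> b"
    have "a \<in> \<Theta>" "b \<in> \<Theta>" using that(1,2) U(3) unfolding W_def by auto
    then have "obs_equiv \<Theta> (joint_outputs N L R) joint_q a b"
      using \<open>a \<noteq> b\<close> joint_q_eq_if_free_cells_eq[OF _ _ that(3)] by (simp add: obs_equiv_def)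
    then have "a \<in> ?F" using that(1) \<open>a \<in> \<Theta>\<close> by (auto simp: W_def nonidentifiable_point_def)
    then show False using that(1) by (simp add: W_def)
  qed
  ultimately have "CARD('d) \<le> card free_cells"
    by (intro DIM_le_card_of_continuous_separating[where \<phi> = "\<lambda>(j, l, r). p j l r"]
        finite_free_cells) auto
  then show False using small by simp
qed

lemma fisher_info_singular:
  assumes "\<theta>0 \<in> interior \<Theta>"
    and "\<And>j s. j < N \<Longrightarrow> s \<in> outputs j \<Longrightarrow> twice_differentiable_on (q j s) \<Theta>"
    and "card free_cells < CARD('d)"
  shows "\<not> invertible (fisher_info N (\<lambda>j. outputs j) q \<theta>0)"
proof -
  have "(q j s has_derivative (\<lambda>h. grad (q j s) \<theta>0 \<bullet> h)) (at \<theta>0)" if "j < N" "s \<in> outputs j" for j s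
    using assms(2)[OF that] assms(1) by (rule twice_differentiable_on_has_derivative_grad)
  then obtain G where "finite G" "card G \<le> card free_cells"
    "\<And>j s. j < N \<Longrightarrow> s \<in> outputs j \<Longrightarrow> grad (q j s) \<theta>0 \<in> span G"
    using grad_q_in_span[OF assms(1)] by blast
  then show ?thesis using assms(3) by (intro fisher_info_not_invertible) auto
qed

lemma not_identifiable_space:
  assumes "\<And>j s. j < N \<Longrightarrow> s \<in> outputs j \<Longrightarrow> continuous_on \<Theta> (q j s)"
    and "card free_cells < CARD('d)" "interior \<Theta> \<noteq> {}"
  shows "\<not> identifiable_space \<Theta> (joint_outputs N L R) joint_q"
proof -
  obtain \<theta> where "\<theta> \<in> interior \<Theta>" "nonidentifiable_point \<Theta> (joint_outputs N L R) joint_q \<theta>"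
    using infinite_nonidentifiable_points[OF assms(1,2) open_interior assms(3) interior_subset]
      not_finite_existsD by blast
  then show ?thesis
    unfolding identifiable_space_def identifiable_point_def nonidentifiable_point_def by blast
qed

end

lemma product_model_quant_prob:
  assumes model: "\<And>j l \<theta>. j < N \<Longrightarrow> l < L j \<Longrightarrow> \<theta> \<in> \<Theta> \<Longrightarrow>
                    prob_space (P j l \<theta>) \<and> sets (P j l \<theta>) = sets (S j l)"
    and "\<And>j l r. j < N \<Longrightarrow> l < L j \<Longrightarrow> r \<in> {1..R j l} \<Longrightarrow> I j l r \<in> sets (S j l)"
    and "\<And>j l. j < N \<Longrightarrow> l < L j \<Longrightarrow> disjoint_family_on (I j l) {1..R j l}"
    and "\<And>j l. j < N \<Longrightarrow> l < L j \<Longrightarrow> (\<Union>r\<in>{1..R j l}. I j l r) = space (S j l)"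
    and "\<Theta> \<noteq> {}"
  shows "product_model N L R (quant_prob P I R) (sensor_prob P I R L) \<Theta>"
proof
  show "(\<Sum>r\<in>{1..R j l}. quant_prob P I R j l r \<theta>) = 1"
    if "j < N" "l < L j" "\<theta> \<in> \<Theta>" for j l \<theta>
  proof -
    have "space (P j l \<theta>) = space (S j l)"
      using model[OF that] sets_eq_imp_space_eq by blast
    then show ?thesis
      unfolding quant_prob_def using model[OF that] assms(2-4)[OF that(1,2)]
      by (intro sum_prob_quant_level_sets) auto
  qed
next
  show "sensor_prob P I R L j s \<theta> = (\<Prod>l<L j. quant_prob P I R j l (s l) \<theta>)" for j s \<theta>
    by (rule sensor_prob_eq_prod_quant_prob)
qed (fact assms(5))

theorem theorem4:
  fixes N :: nat and L :: "nat \<Rightarrow> nat" and R :: "nat \<Rightarrow> nat \<Rightarrow> nat"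
    and S :: "nat \<Rightarrow> nat \<Rightarrow> 'a measure"
    and P :: "nat \<Rightarrow> nat \<Rightarrow> real^'d \<Rightarrow> 'a measure"
    and I :: "nat \<Rightarrow> nat \<Rightarrow> nat \<Rightarrow> 'a set"
    and \<Theta> :: "(real^'d) set"
  assumes model: "\<And>j l \<theta>. j < N \<Longrightarrow> l < L j \<Longrightarrow> \<theta> \<in> \<Theta> \<Longrightarrow>
                    prob_space (P j l \<theta>) \<and> sets (P j l \<theta>) = sets (S j l)"
    and regions_meas: "\<And>j l r. j < N \<Longrightarrow> l < L j \<Longrightarrow> r \<in> {1..R j l} \<Longrightarrow> I j l r \<in> sets (S j l)"
    and regions_disj: "\<And>j l. j < N \<Longrightarrow> l < L j \<Longrightarrow> disjoint_family_on (I j l) {1..R j l}"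
    and regions_cover: "\<And>j l. j < N \<Longrightarrow> l < L j \<Longrightarrow> (\<Union>r\<in>{1..R j l}. I j l r) = space (S j l)"
    and int_nonempty: "interior \<Theta> \<noteq> {}"
    and dim: "int CARD('d) > lambda_indep N L R"
  shows "((\<forall>j<N. \<forall>s\<in>sensor_outputs (L j) (R j).
              twice_differentiable_on (sensor_prob P I R L j s) \<Theta>)
          \<longrightarrow> (\<forall>\<theta>\<in>interior \<Theta>.
                \<not> invertible (fisher_info N (\<lambda>j. sensor_outputs (L j) (R j)) (sensor_prob P I R L) \<theta>)))
       \<and> ((\<forall>j<N. \<forall>s\<in>sensor_outputs (L j) (R j). continuous_on \<Theta> (sensor_prob P I R L j s))
          \<longrightarrow> \<not> identifiable_space \<Theta> (joint_outputs N L R) (joint_prob P I R L N)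
              \<and> (\<forall>U. open U \<and> U \<noteq> {} \<and> U \<subseteq> \<Theta> \<longrightarrow>
                    infinite {\<theta> \<in> U. nonidentifiable_point \<Theta> (joint_outputs N L R) (joint_prob P I R L N) \<theta>}))"
proof -
  have "\<Theta> \<noteq> {}" using int_nonempty interior_subset by blast
  interpret product_model N L R "quant_prob P I R" "sensor_prob P I R L" \<Theta>
    by (rule product_model_quant_prob[OF model regions_meas regions_disj regions_cover \<open>\<Theta> \<noteq> {}\<close>])
  have small: "card free_cells < CARD('d)" using card_free_cells dim by simp
  have joint: "joint_prob P I R L N = joint_q" by (simp add: fun_eq_iff joint_prob_def)
  show ?thesis unfolding joint
  proof (intro conjI impI ballI allI)
    show "\<not> invertible (fisher_info N (\<lambda>j. outputs j) (sensor_prob P I R L) \<theta>)"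
      if "\<forall>j<N. \<forall>s\<in>outputs j. twice_differentiable_on (sensor_prob P I R L j s) \<Theta>"
        and "\<theta> \<in> interior \<Theta>" for \<theta>
      using that(1) by (intro fisher_info_singular[OF that(2) _ small]) simp
    show "\<not> identifiable_space \<Theta> (joint_outputs N L R) joint_q"
      if "\<forall>j<N. \<forall>s\<in>outputs j. continuous_on \<Theta> (sensor_prob P I R L j s)"
      using that by (intro not_identifiable_space[OF _ small int_nonempty]) simp
    show "infinite {\<theta> \<in> U. nonidentifiable_point \<Theta> (joint_outputs N L R) joint_q \<theta>}"
      if "\<forall>j<N. \<forall>s\<in>outputs j. continuous_on \<Theta> (sensor_prob P I R L j s)"
        and "open U \<and> U \<noteq> {} \<and> U \<subseteq> \<Theta>" for U
      using that by (intro infinite_nonidentifiable_points[OF _ small]) simp_all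
  qed
qed

end
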